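(* Let $\mathbb{P}$ be a pre-Pawlikowski lattice and let $\sigma$ be a strategy for Player I in the game $\mathsf{G}_{\mathrm{fin}}(\mathbb{V}_1,\mathbb{V}_1)$. If $\mathsf{S}_{\mathrm{fin}}(\mathbb{V}_1,\mathbb{V}_1)$ holds, then there is a play $(A_0,F_0,A_1,F_1,\dots)$ according to $\sigma$ such that for every $p\in\mathbb{P}\setminus\{1\}$ we have $\sup F_n\not\leq p$ for infinitely many $n$.
   Context: A lattice is a poset where any two elements have a supremum and an infimum; it is bounded if it has a minimum $0$ and a maximum $1$. A prime element is $q\neq 1$ with: $a\wedge b\leq q$ implies $a\leq q$ or $b\leq q$. Enough prime elements: whenever $a\not\leq b$ there is a prime $q$ with $b\leq q$, $a\not\leq q$. A pre-Pawlikowski lattice is a bounded lattice with enough prime elements. $\mathbb{V}_1$ is the family of subsets $A\subseteq\mathbb{P}$ with $\sup A=1$. $\mathsf{S}_{\mathrm{fin}}(\mathbb{V}_1,\mathbb{V}_1)$: for every sequence $(A_n)_{n\in\omega}$ in $\mathbb{V}_1$ there are finite $F_n\subseteq A_n$ with $\sup\bigcup_n F_n=1$. The game $\mathsf{G}_{\mathrm{fin}}(\mathbb{V}_1,\mathbb{V}_1)$: in inning $n\in\omega$ Player I plays $A_n\in\mathbb{V}_1$ and Player II responds with a finite $F_n\subseteq A_n$; II wins if $\sup\bigcup_n F_n=1$. A strategy for Player I assigns Player I's move to each finite sequence of Player II's previous moves; a play is according to $\sigma$ if each $A_n$ is the value of $\sigma$ at $(F_0,\dots,F_{n-1})$. For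 a finite set $F$, $\sup F$ is its join (with $\sup\emptyset=0$). *)

theory Defs
  imports Main
begin

text \<open>The lattice is a type of class bounded_lattice (bot = 0, top = 1).\<close>

definition is_sup_top :: "'a::bounded_lattice set \<Rightarrow> bool" where
  "is_sup_top A \<longleftrightarrow> (\<forall>u. (\<forall>a\<in>A. a \<le> u) \<longrightarrow> u = top)"

definition V1 :: "'a::bounded_lattice set set" where
  "V1 = {A. is_sup_top A}"

definition prime_el :: "'a::bounded_lattice \<Rightarrow> bool" where
  "prime_el q \<longleftrightarrow> q \<noteq> top \<and> (\<forall>a b. inf a b \<le> q \<longrightarrow> a \<le> q \<or> b \<le> q)"

definition enough_primes :: "'a::bounded_lattice itself \<Rightarrow> bool" where
  "enough_primes _ \<longleftrightarrow> (\<forall>a b::'a. \<not> a \<le> b \<longrightarrow> (\<exists>q. prime_el q \<and> b \<le> q \<and> \<not> a \<le> q))"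

definition pre_pawlikowski :: "'a::bounded_lattice itself \<Rightarrow> bool" where
  "pre_pawlikowski T \<longleftrightarrow> enough_primes T"

definition S_fin_V1 :: "'a::bounded_lattice itself \<Rightarrow> bool" where
  "S_fin_V1 _ \<longleftrightarrow> (\<forall>A :: nat \<Rightarrow> 'a set. (\<forall>n. A n \<in> V1) \<longrightarrow>
      (\<exists>F. (\<forall>n. finite (F n) \<and> F n \<subseteq> A n) \<and> (\<Union>n. F n) \<in> V1))"

definition fsup :: "'a::bounded_lattice set \<Rightarrow> 'a" where
  "fsup F = Finite_Set.fold sup bot F"

text \<open>A strategy for Player I: maps the list of II's previous moves to a move in V1.\<close>
definition strategy_I :: "('a::bounded_lattice set list \<Rightarrow> 'a set) \<Rightarrow> bool" where
  "strategy_I \<sigma> \<longleftrightarrow> (\<forall>s. \<sigma> s \<in> V1)"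

definition play_according :: "('a::bounded_lattice set list \<Rightarrow> 'a set) \<Rightarrow> (nat \<Rightarrow> 'a set) \<Rightarrow> bool" where
  "play_according \<sigma> F \<longleftrightarrow> (\<forall>n. finite (F n) \<and> F n \<subseteq> \<sigma> (map F [0..<n]))"

end

theory Submission
  imports Defs
begin

text \<open>
  With enough primes, \<open>a \<mapsto> {q prime. \<not> a \<le> q}\<close> embeds the lattice into the subsets of its
  prime spectrum; members of \<open>V1\<close> become covers by these basic open sets, which are closed
  under finite intersections, and \<open>S_fin(V1,V1)\<close> becomes the Menger property of the spectrum.
  The argument is then Hurewicz's.  Applying \<open>S_fin\<close> to the constant sequence \<open>\<sigma>(s)\<close> gives, at
  every position \<open>s\<close>, an increasing sequence of finite subsets of \<open>\<sigma>(s)\<close> whose joins cover; II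
  answers with one of them, so positions are coded by finite lists of natural numbers.  The
  finitely many lists of length and entries at most \<open>m\<close> have a common increasing cover, and
  \<open>S_fin\<close> applied to the chained covers (level \<open>n\<close> by stage \<open>m\<close>, then level \<open>m\<close> by stage \<open>j\<close>),
  together with a fast-growing sequence \<open>b\<close>, yields for each prime infinitely many \<open>k\<close> such that
  all of level \<open>b k\<close> is covered by stage \<open>b (k+1)\<close>.  II plays stage \<open>b (k+1)\<close> in inning \<open>k\<close>,
  which keeps the position inside level \<open>b k\<close>.
\<close>

lemma fsup_empty [simp]: "fsup {} = bot"
  unfolding fsup_def by simp

lemma fsup_insert:
  assumes "finite F"
  shows "fsup (insert a F) = sup a (fsup F)"
proof -
  interpret comp_fun_idem "sup :: 'a \<Rightarrow> 'a \<Rightarrow> 'a" by (fact comp_fun_idem_sup)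
  show ?thesis unfolding fsup_def using assms by (rule fold_insert_idem)
qed

lemma fsup_upper: "finite F \<Longrightarrow> a \<in> F \<Longrightarrow> a \<le> fsup F"
  by (induction F rule: finite_induct) (auto simp: fsup_insert intro: le_supI2)

lemma fsup_least: "finite F \<Longrightarrow> (\<And>a. a \<in> F \<Longrightarrow> a \<le> u) \<Longrightarrow> fsup F \<le> u"
  by (induction F rule: finite_induct) (auto simp: fsup_insert)

lemma fsup_mono: "finite G \<Longrightarrow> F \<subseteq> G \<Longrightarrow> fsup F \<le> fsup G"
  by (meson fsup_least fsup_upper rev_finite_subset subsetD)

definition spectrum :: "'a::bounded_lattice set" where
  "spectrum = {q. prime_el q}"

definition basic_open :: "'a::bounded_lattice \<Rightarrow> 'a set" where
  "basic_open c = {q \<in> spectrum. \<not> c \<le> q}"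

lemma basic_open_mono: "a \<le> b \<Longrightarrow> basic_open a \<subseteq> basic_open b"
  unfolding basic_open_def using order_trans by blast

lemma basic_open_bot [simp]: "basic_open bot = {}"
  unfolding basic_open_def by simp

lemma basic_open_sup: "basic_open (sup a b) = basic_open a \<union> basic_open b"
  unfolding basic_open_def by auto

lemma basic_open_inf: "basic_open (inf a b) = basic_open a \<inter> basic_open b"
  unfolding basic_open_def spectrum_def prime_el_def by (auto intro: le_infI1 le_infI2)

lemma basic_open_fsup: "finite F \<Longrightarrow> basic_open (fsup F) = (\<Union>a\<in>F. basic_open a)"
  by (induction F rule: finite_induct) (simp_all add: fsup_insert basic_open_sup)

lemma basic_open_Inf_fin:
  "finite A \<Longrightarrow> A \<noteq> {} \<Longrightarrow> basic_open (Inf_fin A) = (\<Inter>a\<in>A. basic_open a)"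
  by (induction A rule: finite_ne_induct) (simp_all add: basic_open_inf)

lemma ex_prime_above:
  assumes "enough_primes TYPE('a::bounded_lattice)" and "(p::'a) \<noteq> top"
  shows "\<exists>q. prime_el q \<and> p \<le> q"
  using assms top_unique unfolding enough_primes_def by blast

lemma basic_open_subset_iff:
  assumes "enough_primes TYPE('a::bounded_lattice)"
  shows "basic_open (a::'a) \<subseteq> basic_open b \<longleftrightarrow> a \<le> b"
  using assms basic_open_mono unfolding enough_primes_def basic_open_def spectrum_def by blast

lemma V1_iff_covers_spectrum:
  assumes "enough_primes TYPE('a::bounded_lattice)"
  shows "(A::'a set) \<in> V1 \<longleftrightarrow> spectrum \<subseteq> (\<Union>a\<in>A. basic_open a)"
proof
  assume "A \<in> V1"
  then show "spectrum \<subseteq> (\<Union>a\<in>A. basic_open a)"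
    unfolding V1_def is_sup_top_def basic_open_def spectrum_def prime_el_def by blast
next
  assume cover: "spectrum \<subseteq> (\<Union>a\<in>A. basic_open a)"
  show "A \<in> V1"
    unfolding V1_def is_sup_top_def
  proof (intro CollectI allI impI)
    fix u assume upper: "\<forall>a\<in>A. a \<le> u"
    show "u = top"
    proof (rule ccontr)
      assume "u \<noteq> top"
      then obtain q where "q \<in> spectrum" "u \<le> q"
        using ex_prime_above[OF assms] unfolding spectrum_def by blast
      with cover upper show False
        unfolding basic_open_def by (blast intro: order_trans)
    qed
  qed
qed

lemma V1_dominated:
  assumes "A \<in> V1" and "\<And>a. a \<in> A \<Longrightarrow> \<exists>b\<in>B. a \<le> b"
  shows "B \<in> V1"
  unfolding V1_def is_sup_top_def
proof (intro CollectI allI impI)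
  fix u
  assume "\<forall>b\<in>B. b \<le> u"
  with assms(2) have "\<forall>a\<in>A. a \<le> u"
    by (meson order_trans)
  with assms(1) show "u = top"
    unfolding V1_def is_sup_top_def by blast
qed

lemma mono_bound_finite_subset_range:
  fixes f :: "nat \<Rightarrow> 'b::order"
  assumes "mono f" and "finite F" and "F \<subseteq> range f"
  shows "\<exists>k. \<forall>a\<in>F. a \<le> f k"
proof -
  obtain C where "finite C" and F: "F = f ` C"
    using finite_subset_image[OF assms(2,3)] by blast
  then obtain k where "\<forall>j\<in>C. j \<le> k"
    using finite_nat_set_iff_bounded_le by blast
  then show ?thesis using assms(1) F by (auto dest: monoD)
qed

lemma S_fin_V1_select:
  fixes r :: "nat \<Rightarrow> nat \<Rightarrow> 'a::bounded_lattice"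
  assumes "S_fin_V1 TYPE('a)" and "\<And>n. mono (r n)" and "\<And>n. range (r n) \<in> V1"
  shows "\<exists>h. range (\<lambda>n. r n (h n)) \<in> V1"
proof -
  from assms(1) have "(\<forall>n. range (r n) \<in> V1) \<longrightarrow>
      (\<exists>F. (\<forall>n. finite (F n) \<and> F n \<subseteq> range (r n)) \<and> (\<Union>n. F n) \<in> V1)"
    unfolding S_fin_V1_def by (rule spec[of _ "\<lambda>n. range (r n)"])
  then have "\<exists>F. (\<forall>n. finite (F n) \<and> F n \<subseteq> range (r n)) \<and> (\<Union>n. F n) \<in> V1"
    using assms(3) by simp
  then obtain F where F: "\<forall>n. finite (F n) \<and> F n \<subseteq> range (r n)" and "(\<Union>n. F n) \<in> V1"
    by (elim exE conjE)
  have "\<exists>k. \<forall>a\<in>F n. a \<le> r n k" for n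
    using F by (intro mono_bound_finite_subset_range[OF assms(2)]) auto
  then have "\<forall>n. \<exists>k. \<forall>a\<in>F n. a \<le> r n k"
    by blast
  then obtain h where h: "\<forall>n. \<forall>a\<in>F n. a \<le> r n (h n)"
    by (rule choice[THEN exE])
  have "range (\<lambda>n. r n (h n)) \<in> V1"
    using \<open>(\<Union>n. F n) \<in> V1\<close>
  proof (rule V1_dominated)
    fix a
    assume "a \<in> (\<Union>n. F n)"
    then obtain n where "a \<in> F n"
      by blast
    with h show "\<exists>b\<in>range (\<lambda>n. r n (h n)). a \<le> b"
      by blast
  qed
  then show ?thesis
    by blast
qed

lemma S_fin_V1_select_frequently:
  fixes r :: "nat \<Rightarrow> nat \<Rightarrow> 'a::bounded_lattice"
  assumes "S_fin_V1 TYPE('a)" and mono: "\<And>n. mono (r n)" and "\<And>n. range (r n) \<in> V1"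
  shows "\<exists>h. \<forall>N. (\<lambda>n. r n (h n)) ` {N..} \<in> V1"
proof -
  have "\<forall>N. \<exists>g. range (\<lambda>n. r (n + N) (g n)) \<in> V1"
  proof
    fix N
    show "\<exists>g. range (\<lambda>n. r (n + N) (g n)) \<in> V1"
      by (rule S_fin_V1_select[OF assms(1)]) (use assms in auto)
  qed
  then obtain g where g: "\<And>N. range (\<lambda>n. r (n + N) (g N n)) \<in> V1"
    by metis
  define h where "h n = Max ((\<lambda>N. g N (n - N)) ` {..n})" for n
  have "g N n \<le> h (n + N)" for N n
  proof -
    have "g N n \<in> (\<lambda>N'. g N' (n + N - N')) ` {..n + N}"
      by (rule image_eqI[of _ _ N]) auto
    then show ?thesis
      unfolding h_def by (rule Max_ge[rotated]) simp
  qed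
  then have dominated: "r (n + N) (g N n) \<le> r (n + N) (h (n + N))" for N n
    by (rule monoD[OF mono])
  have "(\<lambda>n. r n (h n)) ` {N..} \<in> V1" for N
    using g[of N]
  proof (rule V1_dominated)
    fix a assume "a \<in> range (\<lambda>n. r (n + N) (g N n))"
    then obtain n where "a = r (n + N) (g N n)"
      by blast
    then show "\<exists>b\<in>(\<lambda>n. r n (h n)) ` {N..}. a \<le> b"
      using dominated by (intro bexI[of _ "r (n + N) (h (n + N))"]) auto
  qed
  then show ?thesis by blast
qed

lemma S_fin_V1_increasing_finite_subsets:
  fixes A :: "'a::bounded_lattice set"
  assumes "S_fin_V1 TYPE('a)" and "A \<in> V1"
  shows "\<exists>G :: nat \<Rightarrow> 'a set. (\<forall>k. finite (G k) \<and> G k \<subseteq> A) \<and> mono (\<lambda>k. fsup (G k))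
             \<and> range (\<lambda>k. fsup (G k)) \<in> V1"
proof -
  from assms(1) have "(\<forall>n::nat. A \<in> V1) \<longrightarrow>
      (\<exists>F :: nat \<Rightarrow> 'a set. (\<forall>n. finite (F n) \<and> F n \<subseteq> A) \<and> (\<Union>n. F n) \<in> V1)"
    unfolding S_fin_V1_def by (rule spec[of _ "\<lambda>_. A"])
  then have "\<exists>F :: nat \<Rightarrow> 'a set. (\<forall>n. finite (F n) \<and> F n \<subseteq> A) \<and> (\<Union>n. F n) \<in> V1"
    using assms(2) by simp
  then obtain F :: "nat \<Rightarrow> 'a set" where F: "\<forall>n. finite (F n) \<and> F n \<subseteq> A"
      and "(\<Union>n. F n) \<in> V1"
    by (elim exE conjE)
  define G where "G k = (\<Union>i<k. F i)" for k
  have fin: "finite (G k)" for k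
    unfolding G_def using F by simp
  moreover have "G k \<subseteq> A" for k
    unfolding G_def using F by blast
  moreover have "mono (\<lambda>k. fsup (G k))"
  proof (rule monoI)
    fix k k' :: nat
    assume "k \<le> k'"
    then have "G k \<subseteq> G k'"
      unfolding G_def by (intro UN_mono) auto
    then show "fsup (G k) \<le> fsup (G k')"
      by (rule fsup_mono[OF fin])
  qed
  moreover have "range (\<lambda>k. fsup (G k)) \<in> V1"
    using \<open>(\<Union>n. F n) \<in> V1\<close>
  proof (rule V1_dominated)
    fix a assume "a \<in> (\<Union>n. F n)"
    then obtain i where "a \<in> F i"
      by blast
    then have "a \<in> G (Suc i)"
      unfolding G_def by auto
    then show "\<exists>b\<in>range (\<lambda>k. fsup (G k)). a \<le> b"
      using fsup_upper[OF fin] by blast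
  qed
  ultimately show ?thesis
    by blast
qed

lemma ex_strict_mono_dominating:
  fixes h :: "nat \<Rightarrow> nat"
  shows "\<exists>b. strict_mono b \<and> (\<forall>k n. n \<le> b k \<longrightarrow> h n \<le> b (Suc k))"
proof -
  define b where "b k = ((\<lambda>m. Suc (m + (\<Sum>i\<le>m. h i))) ^^ k) 0" for k
  have b_Suc: "b (Suc k) = Suc (b k + (\<Sum>i\<le>b k. h i))" for k
    by (simp add: b_def)
  have "strict_mono b"
    unfolding strict_mono_Suc_iff by (simp add: b_Suc)
  moreover have "h n \<le> b (Suc k)" if "n \<le> b k" for k n
  proof -
    have "h n \<le> (\<Sum>i\<le>b k. h i)"
      using that by (intro member_le_sum) auto
    then show ?thesis by (simp add: b_Suc)
  qed
  ultimately show ?thesis by blast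
qed

lemma strict_mono_interval:
  fixes b :: "nat \<Rightarrow> nat"
  assumes b: "strict_mono b" and "b N \<le> n"
  shows "\<exists>k\<ge>N. b k \<le> n \<and> n < b (Suc k)"
proof -
  let ?K = "{k. b k \<le> n}"
  have "?K \<subseteq> {..n}"
    by (auto intro: le_trans[OF strict_mono_imp_increasing[OF b]])
  then have fin: "finite ?K"
    by (rule finite_subset) simp
  have "N \<in> ?K"
    using assms(2) by simp
  define k where "k = Max ?K"
  have "N \<le> k" "b k \<le> n"
    using Max_ge[OF fin \<open>N \<in> ?K\<close>] Max_in[OF fin] \<open>N \<in> ?K\<close> unfolding k_def by auto
  moreover have "n < b (Suc k)"
    using Max_ge[OF fin, of "Suc k"] unfolding k_def by fastforce
  ultimately show ?thesis by blast
qed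

definition bounded_lists :: "nat \<Rightarrow> nat list set" where
  "bounded_lists m = {xs. set xs \<subseteq> {..m} \<and> length xs \<le> m}"

lemma finite_bounded_lists: "finite (bounded_lists m)"
  unfolding bounded_lists_def by (rule finite_lists_length_le) simp

lemma bounded_lists_mono: "m \<le> m' \<Longrightarrow> bounded_lists m \<subseteq> bounded_lists m'"
  unfolding bounded_lists_def by auto

definition common_cover :: "(nat list \<Rightarrow> nat \<Rightarrow> 'a::bounded_lattice) \<Rightarrow> nat \<Rightarrow> nat \<Rightarrow> 'a" where
  "common_cover U m j = Inf_fin ((\<lambda>xs. U xs j) ` bounded_lists m)"

definition chained_cover :: "(nat list \<Rightarrow> nat \<Rightarrow> 'a::bounded_lattice) \<Rightarrow> nat \<Rightarrow> nat \<Rightarrow> 'a" where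
  "chained_cover U n j = fsup ((\<lambda>m. inf (common_cover U n m) (common_cover U m j)) ` {..j})"

lemma basic_open_common_cover:
  "basic_open (common_cover U m j) = (\<Inter>xs\<in>bounded_lists m. basic_open (U xs j))"
proof -
  have "[] \<in> bounded_lists m"
    unfolding bounded_lists_def by simp
  then have "bounded_lists m \<noteq> {}"
    by blast
  then show ?thesis
    unfolding common_cover_def by (simp add: basic_open_Inf_fin finite_bounded_lists)
qed

lemma basic_open_common_cover_mono:
  assumes "\<And>xs. mono (U xs)" and "m \<le> m'" and "j \<le> j'"
  shows "basic_open (common_cover U m' j) \<subseteq> basic_open (common_cover U m j')"
  using bounded_lists_mono[OF assms(2)] basic_open_mono[OF monoD[OF assms(1) assms(3)]]
  unfolding basic_open_common_cover by blast

lemma basic_open_chained_cover: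
  "basic_open (chained_cover U n j)
     = (\<Union>m\<le>j. basic_open (common_cover U n m) \<inter> basic_open (common_cover U m j))"
  unfolding chained_cover_def by (simp add: basic_open_fsup basic_open_inf)

lemma eventually_in_basic_open_common_cover:
  assumes ep: "enough_primes TYPE('a::bounded_lattice)"
    and mono: "\<And>xs. mono (U xs)" and cover: "\<And>xs. range (U xs :: nat \<Rightarrow> 'a) \<in> V1"
    and "q \<in> spectrum"
  shows "eventually (\<lambda>j. q \<in> basic_open (common_cover U m j)) sequentially"
proof -
  have "eventually (\<lambda>j. q \<in> basic_open (U xs j)) sequentially" for xs
  proof -
    obtain j where j: "q \<in> basic_open (U xs j)"
      using cover[of xs] \<open>q \<in> spectrum\<close> unfolding V1_iff_covers_spectrum[OF ep] by blast
    have "q \<in> basic_open (U xs j')" if "j \<le> j'" for j'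
      using basic_open_mono[OF monoD[OF mono that]] j by blast
    then show ?thesis
      unfolding eventually_sequentially by blast
  qed
  then have "eventually (\<lambda>j. \<forall>xs\<in>bounded_lists m. q \<in> basic_open (U xs j)) sequentially"
    by (intro eventually_ball_finite finite_bounded_lists) auto
  then show ?thesis
    by (simp add: basic_open_common_cover)
qed

lemma mono_chained_cover:
  assumes ep: "enough_primes TYPE('a::bounded_lattice)" and mono: "\<And>xs. mono (U xs :: nat \<Rightarrow> 'a)"
  shows "mono (chained_cover U n)"
proof (rule monoI)
  fix j j' :: nat
  assume "j \<le> j'"
  then have "basic_open (common_cover U m j) \<subseteq> basic_open (common_cover U m j')" for m
    by (rule basic_open_common_cover_mono[where U = U, OF mono order_refl])
  with \<open>j \<le> j'\<close> have "basic_open (chained_cover U n j) \<subseteq> basic_open (chained_cover U n j')"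
    unfolding basic_open_chained_cover by (intro UN_mono Int_mono) auto
  then show "chained_cover U n j \<le> chained_cover U n j'"
    using basic_open_subset_iff[OF ep] by blast
qed

lemma chained_cover_V1:
  assumes ep: "enough_primes TYPE('a::bounded_lattice)"
    and mono: "\<And>xs. mono (U xs)" and cover: "\<And>xs. range (U xs :: nat \<Rightarrow> 'a) \<in> V1"
  shows "range (chained_cover U n) \<in> V1"
proof -
  have "\<exists>j. q \<in> basic_open (chained_cover U n j)" if "q \<in> spectrum" for q
  proof -
    note covered = eventually_in_basic_open_common_cover[where U = U, OF ep mono cover that]
    obtain m where m: "q \<in> basic_open (common_cover U n m)"
      using eventually_happens'[OF sequentially_bot covered] by blast
    have "eventually (\<lambda>j. m \<le> j \<and> q \<in> basic_open (common_cover U m j)) sequentially"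
      by (intro eventually_conj eventually_ge_at_top covered)
    then obtain j where "m \<le> j" "q \<in> basic_open (common_cover U m j)"
      using eventually_happens'[OF sequentially_bot] by blast
    with m show ?thesis
      unfolding basic_open_chained_cover by blast
  qed
  then show ?thesis
    unfolding V1_iff_covers_spectrum[OF ep] by blast
qed

lemma common_cover_at_fast_levels:
  assumes mono: "\<And>xs. mono (U xs)" and b: "strict_mono b"
    and dom: "\<And>k n. n \<le> b k \<Longrightarrow> h n \<le> b (Suc k)"
    and "b N \<le> n" and q: "q \<in> basic_open (chained_cover U n (h n))"
  shows "\<exists>k\<ge>N. q \<in> basic_open (common_cover U (b k) (b (Suc k)))"
proof -
  obtain k where k: "N \<le> k" "b k \<le> n" "n < b (Suc k)"
    using strict_mono_interval[OF b \<open>b N \<le> n\<close>] by blast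
  obtain m where m: "m \<le> h n" "q \<in> basic_open (common_cover U n m)"
      "q \<in> basic_open (common_cover U m (h n))"
    using q unfolding basic_open_chained_cover by blast
  \<comment> \<open>The middle stage \<open>m\<close> lies either beyond \<open>b (Suc k)\<close>, and the second link does the job
     one level later, or below it, and the first link does.\<close>
  show ?thesis
  proof (cases "b (Suc k) \<le> m")
    case True
    have "h n \<le> b (Suc (Suc k))"
      using dom[of n "Suc k"] k(3) by simp
    with m(3) have "q \<in> basic_open (common_cover U (b (Suc k)) (b (Suc (Suc k))))"
      using basic_open_common_cover_mono[where U = U, OF mono True] by blast
    with k(1) show ?thesis by (intro exI[of _ "Suc k"]) auto
  next
    case False
    then have "m \<le> b (Suc k)"
      by simp
    with m(2) have "q \<in> basic_open (common_cover U (b k) (b (Suc k)))"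
      using basic_open_common_cover_mono[where U = U, OF mono k(2)] by blast
    with k(1) show ?thesis by blast
  qed
qed

lemma S_fin_V1_frequently_covering_branch:
  fixes U :: "nat list \<Rightarrow> nat \<Rightarrow> 'a::bounded_lattice"
  assumes ep: "enough_primes TYPE('a)" and sf: "S_fin_V1 TYPE('a)"
    and mono: "\<And>xs. mono (U xs)" and cover: "\<And>xs. range (U xs) \<in> V1"
  shows "\<exists>c. \<forall>p. p \<noteq> top \<longrightarrow> infinite {k. \<not> U (map c [0..<k]) (c k) \<le> p}"
proof -
  obtain h where h: "\<And>N. (\<lambda>n. chained_cover U n (h n)) ` {N..} \<in> V1"
    using S_fin_V1_select_frequently[where r = "chained_cover U", OF sf mono_chained_cover[where U = U, OF ep mono]
        chained_cover_V1[where U = U, OF ep mono cover]] by blast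
  obtain b where b: "strict_mono b" and dom: "\<And>k n. n \<le> b k \<Longrightarrow> h n \<le> b (Suc k)"
    using ex_strict_mono_dominating by blast
  define c where "c k = b (Suc k)" for k
  have often: "\<exists>k\<ge>N. \<not> U (map c [0..<k]) (c k) \<le> q" if "prime_el q" for q N
  proof -
    obtain n where "b N \<le> n" "q \<in> basic_open (chained_cover U n (h n))"
      using h[of "b N"] \<open>prime_el q\<close> unfolding V1_iff_covers_spectrum[OF ep] spectrum_def by auto
    then obtain k where "N \<le> k" and k: "q \<in> basic_open (common_cover U (b k) (b (Suc k)))"
      using common_cover_at_fast_levels[where U = U and h = h, OF mono b dom] by blast
    have "map c [0..<k] \<in> bounded_lists (b k)"
      using strict_mono_less_eq[OF b] strict_mono_imp_increasing[OF b]
      unfolding bounded_lists_def c_def by auto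
    with k have "q \<in> basic_open (U (map c [0..<k]) (c k))"
      unfolding basic_open_common_cover c_def by blast
    with \<open>N \<le> k\<close> show ?thesis
      unfolding basic_open_def by blast
  qed
  have "infinite {k. \<not> U (map c [0..<k]) (c k) \<le> p}" if "p \<noteq> top" for p
  proof -
    obtain q where "prime_el q" "p \<le> q"
      using ex_prime_above[OF ep \<open>p \<noteq> top\<close>] by blast
    then have "frequently (\<lambda>k. \<not> U (map c [0..<k]) (c k) \<le> p) sequentially"
      unfolding frequently_sequentially using often by (meson order_trans)
    then show ?thesis
      by (simp add: frequently_cofinite flip: cofinite_eq_sequentially)
  qed
  then show ?thesis by blast
qed

definition replies :: "('b list \<Rightarrow> nat \<Rightarrow> 'b) \<Rightarrow> nat list \<Rightarrow> 'b list" where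
  "replies R xs = foldl (\<lambda>s j. s @ [R s j]) [] xs"

lemma replies_along_sequence:
  "replies R (map c [0..<n]) = map (\<lambda>k. R (replies R (map c [0..<k])) (c k)) [0..<n]"
  by (induction n) (simp_all add: replies_def)

theorem proposition2p2:
  fixes \<sigma> :: "'a::bounded_lattice set list \<Rightarrow> 'a set"
  assumes "pre_pawlikowski TYPE('a)"
    and "strategy_I \<sigma>"
    and "S_fin_V1 TYPE('a)"
  shows "\<exists>F. play_according \<sigma> F \<and>
           (\<forall>p::'a. p \<noteq> top \<longrightarrow> infinite {n. \<not> fsup (F n) \<le> p})"
proof -
  have ep: "enough_primes TYPE('a)"
    using assms(1) unfolding pre_pawlikowski_def .
  have "\<forall>s. \<exists>G :: nat \<Rightarrow> 'a set. (\<forall>k. finite (G k) \<and> G k \<subseteq> \<sigma> s)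
                \<and> mono (\<lambda>k. fsup (G k)) \<and> range (\<lambda>k. fsup (G k)) \<in> V1"
  proof
    fix s
    have "\<sigma> s \<in> V1"
      using assms(2) unfolding strategy_I_def ..
    then show "\<exists>G :: nat \<Rightarrow> 'a set. (\<forall>k. finite (G k) \<and> G k \<subseteq> \<sigma> s)
                \<and> mono (\<lambda>k. fsup (G k)) \<and> range (\<lambda>k. fsup (G k)) \<in> V1"
      by (rule S_fin_V1_increasing_finite_subsets[OF assms(3)])
  qed
  then obtain R :: "'a set list \<Rightarrow> nat \<Rightarrow> 'a set" where R: "\<forall>s. (\<forall>k. finite (R s k) \<and> R s k \<subseteq> \<sigma> s)
                \<and> mono (\<lambda>k. fsup (R s k)) \<and> range (\<lambda>k. fsup (R s k)) \<in> V1"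
    by (rule choice[THEN exE])
  obtain c where c: "\<forall>p. p \<noteq> top \<longrightarrow>
      infinite {k. \<not> fsup (R (replies R (map c [0..<k])) (c k)) \<le> p}"
    using S_fin_V1_frequently_covering_branch[where U = "\<lambda>xs j. fsup (R (replies R xs) j)",
        OF ep assms(3)] R by blast
  define F where "F k = R (replies R (map c [0..<k])) (c k)" for k
  have positions: "map F [0..<n] = replies R (map c [0..<n])" for n
    unfolding F_def by (rule replies_along_sequence[symmetric])
  have "play_according \<sigma> F"
    unfolding play_according_def
  proof (intro allI conjI)
    fix n
    show "finite (F n)"
      unfolding F_def using R by blast
    have "F n \<subseteq> \<sigma> (replies R (map c [0..<n]))"
      unfolding F_def using R by blast
    then show "F n \<subseteq> \<sigma> (map F [0..<n])"
      by (simp only: positions)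
  qed
  moreover have "\<forall>p. p \<noteq> top \<longrightarrow> infinite {n. \<not> fsup (F n) \<le> p}"
    using c by (simp add: F_def)
  ultimately show ?thesis
    by blast
qed

end
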